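(* Let $(Q,\circ)$ and $(Q,* )$ be quandles on the same set $Q$ such that $$(a\circ b)*c=(a*c)\circ(b*c)\quad\text{and}\quad (a*b)\circ c=(a\circ c)*(b\circ c)\qquad\text{for all }a,b,c\in Q.$$ Then every finite word $w=s_1s_2\cdots s_k$ in the alphabet $\{\circ,*,\bar\circ,\bar*\}$ defines a quandle operation $\star_w$ on $Q$, where $$a\star_w b=(\cdots((a\,s_1\,b)\,s_2\,b)\cdots)\,s_k\,b$$ (and the empty word gives $a\star_w b=a$).
   Context: A quandle operation on a set $Q$ is a binary operation $*$ with $x*x=x$, unique right division, and $(x*y)*z=(x*z)*(y*z)$. For a quandle operation $*$, $\bar*$ denotes its right inverse operation: $a=c*b\iff c=a\,\bar*\,b$; similarly $\bar\circ$ for $\circ$. *)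

theory Defs
  imports Main
begin

definition quandle :: "('a \<Rightarrow> 'a \<Rightarrow> 'a) \<Rightarrow> bool" where
  "quandle op \<longleftrightarrow>
     (\<forall>x. op x x = x) \<and>
     (\<forall>a b. \<exists>!c. op c b = a) \<and>
     (\<forall>x y z. op (op x y) z = op (op x z) (op y z))"

definition rinv :: "('a \<Rightarrow> 'a \<Rightarrow> 'a) \<Rightarrow> 'a \<Rightarrow> 'a \<Rightarrow> 'a" where
  "rinv op a b = (THE c. op c b = a)"

datatype letter = Circ | Star | CircBar | StarBar

fun letter_op :: "('a \<Rightarrow> 'a \<Rightarrow> 'a) \<Rightarrow> ('a \<Rightarrow> 'a \<Rightarrow> 'a) \<Rightarrow> letter \<Rightarrow> 'a \<Rightarrow> 'a \<Rightarrow> 'a" where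
  "letter_op circ star Circ a b = circ a b"
| "letter_op circ star Star a b = star a b"
| "letter_op circ star CircBar a b = rinv circ a b"
| "letter_op circ star StarBar a b = rinv star a b"

fun word_op :: "('a \<Rightarrow> 'a \<Rightarrow> 'a) \<Rightarrow> ('a \<Rightarrow> 'a \<Rightarrow> 'a) \<Rightarrow> letter list \<Rightarrow> 'a \<Rightarrow> 'a \<Rightarrow> 'a" where
  "word_op circ star [] a b = a"
| "word_op circ star (s # w) a b = word_op circ star w (letter_op circ star s a b) b"

end

theory Submission
  imports Defs
begin

text \<open>A quandle is the same thing as an idempotent operation whose right translations
\<open>x \<mapsto> x \<cdot> z\<close> are automorphisms of it. Under mutual distributivity the right translations
of \<open>\<circ>\<close>, \<open>*\<close> and of their right inverses are automorphisms of both \<open>\<circ>\<close> and \<open>*\<close>, hence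
so are their composites, the right translations of \<open>\<star>\<^sub>w\<close>; an automorphism of \<open>\<circ>\<close> and \<open>*\<close>
is one of every \<open>\<star>\<^sub>w\<close>, which is self-distributivity. Bijectivity and idempotency pass
letter by letter to the composite.\<close>

definition preserves :: "('a \<Rightarrow> 'a) \<Rightarrow> ('a \<Rightarrow> 'a \<Rightarrow> 'a) \<Rightarrow> bool" where
  "preserves f op \<longleftrightarrow> (\<forall>a b. f (op a b) = op (f a) (f b))"

lemma preservesD: "preserves f op \<Longrightarrow> f (op a b) = op (f a) (f b)"
  by (simp add: preserves_def)

lemma preserves_comp: "preserves f op \<Longrightarrow> preserves g op \<Longrightarrow> preserves (g \<circ> f) op"
  by (simp add: preserves_def)

lemma quandle_iff_translations:
  "quandle op \<longleftrightarrow>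
     (\<forall>x. op x x = x) \<and> (\<forall>b. bij (\<lambda>x. op x b)) \<and> (\<forall>z. preserves (\<lambda>x. op x z) op)"
  unfolding quandle_def preserves_def bij_iff by blast

lemma quandle_idem: "quandle op \<Longrightarrow> op x x = x"
  by (simp add: quandle_def)

lemma quandle_self_distrib: "quandle op \<Longrightarrow> preserves (\<lambda>x. op x z) op"
  by (simp add: quandle_iff_translations)

lemma bij_quandle_translation: "quandle op \<Longrightarrow> bij (\<lambda>x. op x b)"
  by (simp add: quandle_iff_translations)

lemma rinv_cancel:
  assumes "quandle op"
  shows "op (rinv op a b) b = a"
proof -
  from assms have "\<exists>!c. op c b = a" by (simp add: quandle_def)
  then show ?thesis unfolding rinv_def by (rule theI')
qed

lemma rinv_eqI:
  assumes "quandle op" and "op c b = a"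
  shows "rinv op a b = c"
proof -
  from assms(1) have "\<exists>!c. op c b = a" by (simp add: quandle_def)
  with assms(2) rinv_cancel[OF assms(1)] show ?thesis by blast
qed

lemma rinv_op_cancel: "quandle op \<Longrightarrow> rinv op (op a b) b = a"
  by (rule rinv_eqI) simp_all

lemma rinv_idem: "quandle op \<Longrightarrow> rinv op b b = b"
  by (rule rinv_eqI) (simp_all add: quandle_idem)

lemma bij_rinv_translation:
  assumes "quandle op"
  shows "bij (\<lambda>x. rinv op x b)"
  by (rule o_bij[where g = "\<lambda>x. op x b"])
     (simp_all add: fun_eq_iff rinv_cancel rinv_op_cancel assms)

lemma preserves_rinv:
  assumes "quandle op" and "preserves f op"
  shows "preserves f (rinv op)"
  unfolding preserves_def
proof (intro allI)
  fix a b
  have "op (f (rinv op a b)) (f b) = f a"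
    using preservesD[OF assms(2)] rinv_cancel[OF assms(1)] by metis
  then show "f (rinv op a b) = rinv op (f a) (f b)"
    by (rule rinv_eqI[OF assms(1), symmetric])
qed

lemma preserves_rinv_translation:
  assumes "quandle op" and "preserves (\<lambda>x. op x z) op'"
  shows "preserves (\<lambda>x. rinv op x z) op'"
  unfolding preserves_def
proof (intro allI)
  fix a b
  have "op (op' (rinv op a z) (rinv op b z)) z = op' a b"
    using preservesD[OF assms(2)] rinv_cancel[OF assms(1)] by metis
  then show "rinv op (op' a b) z = op' (rinv op a z) (rinv op b z)"
    by (rule rinv_eqI[OF assms(1)])
qed

lemma word_op_Cons_translation:
  "(\<lambda>x. word_op circ star (s # w) x b) = (\<lambda>x. word_op circ star w x b) \<circ> (\<lambda>x. letter_op circ star s x b)"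
  by (simp add: fun_eq_iff)

locale mutually_distributive_quandles =
  fixes circ star :: "'a \<Rightarrow> 'a \<Rightarrow> 'a"
  assumes quandle_circ: "quandle circ"
    and quandle_star: "quandle star"
    and star_circ_distrib: "\<And>a b c. star (circ a b) c = circ (star a c) (star b c)"
    and circ_star_distrib: "\<And>a b c. circ (star a b) c = star (circ a c) (circ b c)"
begin

lemma letter_op_idem: "letter_op circ star s b b = b"
  using quandle_circ quandle_star by (cases s) (simp_all add: quandle_idem rinv_idem)

lemma word_op_idem: "word_op circ star w b b = b"
  by (induction w) (simp_all add: letter_op_idem)

lemma bij_letter_translation: "bij (\<lambda>x. letter_op circ star s x b)"
  using quandle_circ quandle_star
  by (cases s) (simp_all add: bij_quandle_translation bij_rinv_translation)

lemma bij_word_translation: "bij (\<lambda>x. word_op circ star w x b)"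
proof (induction w)
  case Nil
  then show ?case by (simp add: bij_id[unfolded id_def])
next
  case (Cons s w)
  then show ?case
    unfolding word_op_Cons_translation by (rule bij_comp[OF bij_letter_translation])
qed

lemma preserves_letter_op:
  assumes "preserves f circ" and "preserves f star"
  shows "preserves f (letter_op circ star s)"
  using assms preserves_rinv[OF quandle_circ] preserves_rinv[OF quandle_star]
  by (cases s) (simp_all add: preserves_def)

lemma preserves_word_op:
  assumes "preserves f circ" and "preserves f star"
  shows "preserves f (word_op circ star w)"
  unfolding preserves_def
proof (induction w)
  case Nil
  then show ?case by simp
next
  case (Cons s w)
  show ?case
    using Cons.IH preservesD[OF preserves_letter_op[OF assms]] by simp
qed

lemma letter_translation_preserves:
  "preserves (\<lambda>x. letter_op circ star s x z) circ \<and> preserves (\<lambda>x. letter_op circ star s x z) star"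
proof -
  have circ_translation: "preserves (\<lambda>x. circ x z) circ \<and> preserves (\<lambda>x. circ x z) star"
    by (simp add: quandle_self_distrib[OF quandle_circ]) (simp add: preserves_def circ_star_distrib)
  have star_translation: "preserves (\<lambda>x. star x z) circ \<and> preserves (\<lambda>x. star x z) star"
    by (simp add: quandle_self_distrib[OF quandle_star]) (simp add: preserves_def star_circ_distrib)
  show ?thesis
    using circ_translation star_translation
      preserves_rinv_translation[OF quandle_circ] preserves_rinv_translation[OF quandle_star]
    by (cases s) simp_all
qed

lemma word_translation_preserves:
  "preserves (\<lambda>x. word_op circ star w x z) circ \<and> preserves (\<lambda>x. word_op circ star w x z) star"
proof (induction w)
  case Nil
  then show ?case by (simp add: preserves_def)
next
  case (Cons s w)
  then show ?case
    unfolding word_op_Cons_translation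
    using letter_translation_preserves preserves_comp by blast
qed

lemma quandle_word_op: "quandle (word_op circ star w)"
  unfolding quandle_iff_translations
  using word_op_idem bij_word_translation preserves_word_op word_translation_preserves
  by blast

end

theorem theorem4p11:
  fixes circ star :: "'a \<Rightarrow> 'a \<Rightarrow> 'a" and w :: "letter list"
  assumes "quandle circ" and "quandle star"
    and "\<And>a b c. star (circ a b) c = circ (star a c) (star b c)"
    and "\<And>a b c. circ (star a b) c = star (circ a c) (circ b c)"
  shows "quandle (word_op circ star w)"
proof -
  interpret mutually_distributive_quandles circ star
    using assms by unfold_locales
  show ?thesis by (rule quandle_word_op)
qed

end
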